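(* For the base family under the $\mathbf{c}$-weighted MaxWeight algorithm with $\|\boldsymbol\sigma^{(\epsilon)}\|^2\le\widetilde\sigma^2$, let $W_\perp(Q)=\|Q_{\perp\mathcal{K}_{\mathbf{c}}}\|_{\mathbf{c}}$ and $\Delta W_\perp(Q)=\big(W_\perp(Q(t+1))-W_\perp(Q(t))\big)\mathbb{1}\{Q(t)=Q\}$. There exist positive constants $\eta,\kappa,D$ and $\epsilon_0>0$, depending on $\widetilde\sigma,\boldsymbol\nu,A_{\max},\nu_{\min},\mathbf{c},n$ but not on $\epsilon$, such that for all $0<\epsilon\le\epsilon_0$: (i) $\mathbb{P}(|\Delta W_\perp(Q)|\le D)=1$ for all $Q$ (one may take $D=n\sqrt{c_{\max}}A_{\max}$); (ii) $\mathbb{E}[\Delta W_\perp(Q)\mid Q(t)=Q]\le-\eta$ for all $Q$ with $W_\perp(Q)\ge\kappa$.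
   Context: Fix $n\ge2$ and $\mathbf{c}$ with all $c_{ij}>0$, $c_{\max}=\max c_{ij}$. $\langle x,y\rangle_{\mathbf{c}}=\sum_{ij}c_{ij}x_{ij}y_{ij}$, $\|x\|^2_{\mathbf{c}}=\langle x,x\rangle_{\mathbf{c}}$. $\mathcal{P}$: permutation matrices; $\mathcal{F}$: nonnegative matrices with unit row and column sums. $\mathcal{K}_{\mathbf{c}}=\{x:x_{ij}=(w_i+\tilde w_j)/c_{ij},\ w,\tilde w\in\mathbb{R}^n_+\}$; $x_{\parallel\mathcal{K}_{\mathbf{c}}}$ is the $\|\cdot\|_{\mathbf{c}}$-nearest point of $\mathcal{K}_{\mathbf{c}}$, $x_{\perp\mathcal{K}_{\mathbf{c}}}=x-x_{\parallel\mathcal{K}_{\mathbf{c}}}$. Dynamics: $Q(t+1)=Q(t)+A(t)-S(t)+U(t)$, $U_{ij}(t)=\max(0,S_{ij}(t)-Q_{ij}(t)-A_{ij}(t))$, $S(t)\in\arg\max_{s\in\mathcal{P}}\langle Q(t),s\rangle_{\mathbf{c}}$ with uniform random tie-breaking. Base family: arrivals $A^{(\epsilon)}_{ij}(t)\in\{0,\dots,A_{\max}\}$ independent over $(i,j),t$, i.i.d. in $t$, mean $(1-\epsilon)\boldsymbol\nu$, $\boldsymbol\nu$ in the relative interior of $\mathcal{F}$ with $\nu_{\min}=\min\nu_{ij}>0$, variance vector $(\boldsymbol\sigma^{(\epsilon)})^2$. *)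

theory Defs
  imports "HOL-Analysis.Analysis" "HOL-Probability.Probability"
begin

text \<open>Matrices indexed by a finite type 'n (so n = CARD('n)) are functions 'n => 'n => real.\<close>

definition cinner :: "('n::finite \<Rightarrow> 'n \<Rightarrow> real) \<Rightarrow> ('n \<Rightarrow> 'n \<Rightarrow> real) \<Rightarrow> ('n \<Rightarrow> 'n \<Rightarrow> real) \<Rightarrow> real" where
  "cinner c x y = (\<Sum>i\<in>UNIV. \<Sum>j\<in>UNIV. c i j * x i j * y i j)"

definition cnorm :: "('n::finite \<Rightarrow> 'n \<Rightarrow> real) \<Rightarrow> ('n \<Rightarrow> 'n \<Rightarrow> real) \<Rightarrow> real" where
  "cnorm c x = sqrt (cinner c x x)"

definition perm_matrices :: "('n::finite \<Rightarrow> 'n \<Rightarrow> real) set" where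
  "perm_matrices = {s. \<exists>\<pi>. \<pi> permutes (UNIV :: 'n set) \<and> s = (\<lambda>i j. if \<pi> i = j then 1 else 0)}"

definition doubly_stochastic :: "(real^'n::finite^'n) set" where
  "doubly_stochastic = {x. (\<forall>i j. x $ i $ j \<ge> 0) \<and> (\<forall>i. (\<Sum>j\<in>UNIV. x $ i $ j) = 1)
                                \<and> (\<forall>j. (\<Sum>i\<in>UNIV. x $ i $ j) = 1)}"

definition cone_K :: "('n::finite \<Rightarrow> 'n \<Rightarrow> real) \<Rightarrow> ('n \<Rightarrow> 'n \<Rightarrow> real) set" where
  "cone_K c = {x. \<exists>w wt. (\<forall>i. w i \<ge> 0) \<and> (\<forall>j. wt j \<ge> 0) \<and>
                         (\<forall>i j. x i j = (w i + wt j) / c i j)}"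

text \<open>Nearest point of K_c to x in the c-weighted norm (exists and is unique since K_c is a
  closed convex cone and all c_ij > 0).\<close>
definition proj_K :: "('n::finite \<Rightarrow> 'n \<Rightarrow> real) \<Rightarrow> ('n \<Rightarrow> 'n \<Rightarrow> real) \<Rightarrow> ('n \<Rightarrow> 'n \<Rightarrow> real)" where
  "proj_K c x = (SOME y. y \<in> cone_K c \<and> (\<forall>z\<in>cone_K c. cnorm c (\<lambda>i j. x i j - y i j) \<le> cnorm c (\<lambda>i j. x i j - z i j)))"

definition perp_K :: "('n::finite \<Rightarrow> 'n \<Rightarrow> real) \<Rightarrow> ('n \<Rightarrow> 'n \<Rightarrow> real) \<Rightarrow> ('n \<Rightarrow> 'n \<Rightarrow> real)" where
  "perp_K c x = (\<lambda>i j. x i j - proj_K c x i j)"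

definition W_perp :: "('n::finite \<Rightarrow> 'n \<Rightarrow> real) \<Rightarrow> ('n \<Rightarrow> 'n \<Rightarrow> real) \<Rightarrow> real" where
  "W_perp c Q = cnorm c (perp_K c Q)"

definition maxweight_set :: "('n::finite \<Rightarrow> 'n \<Rightarrow> real) \<Rightarrow> ('n \<Rightarrow> 'n \<Rightarrow> real) \<Rightarrow> ('n \<Rightarrow> 'n \<Rightarrow> real) set" where
  "maxweight_set c Q = {s \<in> perm_matrices. \<forall>s'\<in>perm_matrices. cinner c Q s' \<le> cinner c Q s}"

definition unused :: "('n::finite \<Rightarrow> 'n \<Rightarrow> real) \<Rightarrow> ('n \<Rightarrow> 'n \<Rightarrow> real) \<Rightarrow> ('n \<Rightarrow> 'n \<Rightarrow> real) \<Rightarrow> ('n \<Rightarrow> 'n \<Rightarrow> real)" where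
  "unused Q A S = (\<lambda>i j. max 0 (S i j - Q i j - A i j))"

definition next_Q :: "('n::finite \<Rightarrow> 'n \<Rightarrow> real) \<Rightarrow> ('n \<Rightarrow> 'n \<Rightarrow> real) \<Rightarrow> ('n \<Rightarrow> 'n \<Rightarrow> real) \<Rightarrow> ('n \<Rightarrow> 'n \<Rightarrow> real)" where
  "next_Q Q A S = (\<lambda>i j. Q i j + A i j - S i j + unused Q A S i j)"

text \<open>One-step law of (A(t), S(t)) given Q(t)=Q: arrivals A_ij independent with laws p i j
  (values in nat), schedule chosen uniformly among MaxWeight schedules, independently of A.\<close>
definition step_pmf :: "('n::finite \<Rightarrow> 'n \<Rightarrow> real) \<Rightarrow> ('n \<Rightarrow> 'n \<Rightarrow> nat pmf) \<Rightarrow> ('n \<Rightarrow> 'n \<Rightarrow> real)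
     \<Rightarrow> (('n \<Rightarrow> 'n \<Rightarrow> real) \<times> ('n \<Rightarrow> 'n \<Rightarrow> real)) pmf" where
  "step_pmf c p Q = pair_pmf
      (map_pmf (\<lambda>a i j. real (a (i, j))) (Pi_pmf UNIV 0 (\<lambda>(i, j). p i j)))
      (pmf_of_set (maxweight_set c Q))"

text \<open>Delta W_perp on the event Q(t) = Q, as a function of (A(t), S(t)).\<close>
definition delta_W_perp :: "('n::finite \<Rightarrow> 'n \<Rightarrow> real) \<Rightarrow> ('n \<Rightarrow> 'n \<Rightarrow> real)
     \<Rightarrow> ('n \<Rightarrow> 'n \<Rightarrow> real) \<times> ('n \<Rightarrow> 'n \<Rightarrow> real) \<Rightarrow> real" where
  "delta_W_perp c Q AS = W_perp c (next_Q Q (fst AS) (snd AS)) - W_perp c Q"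

end

theory Submission
  imports Defs
begin

(* Through the isometry x |-> (sqrt c_ij * x_ij) the space (R^(n x n), ||.||_c) is Euclidean, and
   K_c is a finitely generated, hence closed, convex cone.  The residual Q_perp = Q - Q_par then
   lies in the polar cone of K_c: all its row and column sums are <= 0.

   Part (i): W_perp is 1-Lipschitz for ||.||_c and every entry of Q moves by at most A_max + 1.

   Part (ii): let W = W_perp(Q) and delta = min nu_ij sqrt c_ij.  The matrix nu + (delta/W) Q_perp
   is nonnegative and substochastic, so by Hall's theorem (via a Birkhoff-type decomposition)
   every MaxWeight schedule S satisfies <Q, S>_c >= <Q, nu>_c + delta W.  Since Q_par has the
   same c-inner product with all doubly stochastic matrices, <Q_perp, S>_c >= <Q_perp, nu>_c + delta W.
   Bounding W_perp(Q(t+1)) by ||Q_perp + (Q(t+1) - Q)||_c, expanding to second order and using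
   <Q_perp, U>_c <= 0 (service is wasted only at empty queues, where Q_perp <= 0) gives
   E[Delta W_perp] <= eps ||nu||_c - delta + D^2/(2W), which is <= -delta/4 as soon as
   eps <= delta/(2 ||nu||_c + 1) and W >= 2 D^2/delta + 1. *)

section \<open>The c-weighted geometry and the cone K_c\<close>

(* Transfers the library's closest-point theory for closed convex sets to K_c. *)
definition emb :: "('n::finite \<Rightarrow> 'n \<Rightarrow> real) \<Rightarrow> ('n \<Rightarrow> 'n \<Rightarrow> real) \<Rightarrow> real^('n \<times> 'n)" where
  "emb c x = (\<chi> k. sqrt (c (fst k) (snd k)) * x (fst k) (snd k))"

lemma emb_nth [simp]: "emb c x $ (i, j) = sqrt (c i j) * x i j"
  by (simp add: emb_def)

lemma emb_diff: "emb c (\<lambda>i j. x i j - y i j) = emb c x - emb c y"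
  by (simp add: emb_def vec_eq_iff algebra_simps)

lemma emb_add: "emb c (\<lambda>i j. x i j + y i j) = emb c x + emb c y"
  by (simp add: emb_def vec_eq_iff algebra_simps)

lemma emb_scale: "emb c (\<lambda>i j. a * x i j) = a *\<^sub>R emb c x"
  by (simp add: emb_def vec_eq_iff algebra_simps)

lemma emb_zero: "emb c (\<lambda>i j. 0) = 0"
  by (simp add: emb_def vec_eq_iff)

lemma sum_prod_UNIV: "(\<Sum>k\<in>UNIV. f (fst k) (snd k)) = (\<Sum>i\<in>UNIV. \<Sum>j\<in>UNIV. f i j)"
  by (simp add: sum.cartesian_product' case_prod_beta flip: UNIV_Times_UNIV)

lemma cinner_emb:
  assumes "\<forall>i j. c i j > 0"
  shows "cinner c x y = inner (emb c x) (emb c y)"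
proof -
  have "inner (emb c x) (emb c y) = (\<Sum>i\<in>UNIV. \<Sum>j\<in>UNIV. sqrt (c i j) * x i j * (sqrt (c i j) * y i j))"
    using sum_prod_UNIV[of "\<lambda>i j. emb c x $ (i, j) * emb c y $ (i, j)"] by (simp add: inner_vec_def)
  also have "\<dots> = cinner c x y"
    unfolding cinner_def using assms
    by (intro sum.cong refl) (simp add: less_imp_le algebra_simps flip: real_sqrt_mult)
  finally show ?thesis ..
qed

lemma cnorm_emb:
  assumes "\<forall>i j. c i j > 0"
  shows "cnorm c x = norm (emb c x)"
  by (simp add: cnorm_def cinner_emb[OF assms] norm_eq_sqrt_inner)

lemma cinner_sym: "cinner c x y = cinner c y x"
  by (simp add: cinner_def mult.commute mult.left_commute)

lemma cinner_add_left: "cinner c (\<lambda>i j. x i j + y i j) z = cinner c x z + cinner c y z"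
  by (simp add: cinner_def algebra_simps sum.distrib)

lemma cinner_diff_left: "cinner c (\<lambda>i j. x i j - y i j) z = cinner c x z - cinner c y z"
  by (simp add: cinner_def algebra_simps sum_subtractf)

lemma cinner_add_right: "cinner c z (\<lambda>i j. x i j + y i j) = cinner c z x + cinner c z y"
  by (simp add: cinner_def algebra_simps sum.distrib)

lemma cinner_diff_right: "cinner c z (\<lambda>i j. x i j - y i j) = cinner c z x - cinner c z y"
  by (simp add: cinner_def algebra_simps sum_subtractf)

lemma cinner_scale_right: "cinner c z (\<lambda>i j. a * x i j) = a * cinner c z x"
  by (simp add: cinner_def algebra_simps sum_distrib_left)

lemma cone_K_zero: "(\<lambda>i j. 0) \<in> cone_K c"
  unfolding cone_K_def by (intro CollectI exI[of _ "\<lambda>_. 0"]) simp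

lemma cone_K_add:
  assumes "x \<in> cone_K c" "y \<in> cone_K c"
  shows "(\<lambda>i j. x i j + y i j) \<in> cone_K c"
proof -
  obtain w wt v vt where "\<forall>i. w i \<ge> 0" "\<forall>j. wt j \<ge> 0" "\<forall>i j. x i j = (w i + wt j) / c i j"
     "\<forall>i. v i \<ge> 0" "\<forall>j. vt j \<ge> 0" "\<forall>i j. y i j = (v i + vt j) / c i j"
    using assms unfolding cone_K_def by blast
  then show ?thesis unfolding cone_K_def
    by (intro CollectI exI[of _ "\<lambda>i. w i + v i"] exI[of _ "\<lambda>j. wt j + vt j"]) (auto simp: add_divide_distrib)
qed

lemma cone_K_scale:
  assumes "x \<in> cone_K c" "a \<ge> 0"
  shows "(\<lambda>i j. a * x i j) \<in> cone_K c"
proof -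
  obtain w wt where "\<forall>i. w i \<ge> 0" "\<forall>j. wt j \<ge> 0" "\<forall>i j. x i j = (w i + wt j) / c i j"
    using assms(1) unfolding cone_K_def by blast
  then show ?thesis unfolding cone_K_def using assms(2)
    by (intro CollectI exI[of _ "\<lambda>i. a * w i"] exI[of _ "\<lambda>j. a * wt j"]) (auto simp: algebra_simps)
qed

lemma cone_K_nonneg: "\<forall>i j. c i j > 0 \<Longrightarrow> x \<in> cone_K c \<Longrightarrow> x i j \<ge> 0"
  unfolding cone_K_def by (auto intro!: divide_nonneg_pos add_nonneg_nonneg)

lemma cinner_cone_K_generator:
  assumes "\<forall>i j. c i j > 0"
  shows "cinner c (\<lambda>i j. (w i + wt j) / c i j) z
           = (\<Sum>i\<in>UNIV. w i * (\<Sum>j\<in>UNIV. z i j)) + (\<Sum>j\<in>UNIV. wt j * (\<Sum>i\<in>UNIV. z i j))"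
proof -
  have "cinner c (\<lambda>i j. (w i + wt j) / c i j) z = (\<Sum>i\<in>UNIV. \<Sum>j\<in>UNIV. w i * z i j + wt j * z i j)"
    unfolding cinner_def using assms by (intro sum.cong refl) (simp add: field_simps less_imp_neq[symmetric])
  then show ?thesis
    by (simp add: sum.distrib sum_distrib_left sum.swap[of "\<lambda>i j. wt j * z i j"])
qed

lemma cinner_cone_K_doubly_stochastic:
  assumes c_pos: "\<forall>i j. c i j > 0" and "k \<in> cone_K c"
    and "\<forall>i. (\<Sum>j\<in>UNIV. z i j) = 1" "\<forall>j. (\<Sum>i\<in>UNIV. z i j) = 1"
    and "\<forall>i. (\<Sum>j\<in>UNIV. z' i j) = 1" "\<forall>j. (\<Sum>i\<in>UNIV. z' i j) = 1"
  shows "cinner c k z = cinner c k z'"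
proof -
  obtain w wt where "k = (\<lambda>i j. (w i + wt j) / c i j)"
    using assms(2) unfolding cone_K_def by blast
  then show ?thesis
    using assms(3-) by (simp add: cinner_cone_K_generator[OF c_pos])
qed

definition row_gen :: "('n::finite \<Rightarrow> 'n \<Rightarrow> real) \<Rightarrow> 'n \<Rightarrow> 'n \<Rightarrow> 'n \<Rightarrow> real" where
  "row_gen c i0 = (\<lambda>i j. if i = i0 then 1 / c i j else 0)"

definition col_gen :: "('n::finite \<Rightarrow> 'n \<Rightarrow> real) \<Rightarrow> 'n \<Rightarrow> 'n \<Rightarrow> 'n \<Rightarrow> real" where
  "col_gen c j0 = (\<lambda>i j. if j = j0 then 1 / c i j else 0)"

lemma convex_cone_sum:
  "convex_cone S \<Longrightarrow> (\<And>a. a \<in> A \<Longrightarrow> f a \<in> S) \<Longrightarrow> sum f A \<in> S"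
  by (induction A rule: infinite_finite_induct) (auto simp: convex_cone_iff)

lemma convex_cone_emb_cone_K: "convex_cone (emb c ` cone_K c)"
  unfolding convex_cone_iff
proof (intro conjI ballI allI impI)
  show "0 \<in> emb c ` cone_K c"
    using emb_zero cone_K_zero by (metis imageI)
qed (auto simp flip: emb_add emb_scale intro!: imageI cone_K_add cone_K_scale)

lemma emb_cone_K_eq_hull:
  "emb c ` cone_K c = convex_cone hull (range (\<lambda>i. emb c (row_gen c i)) \<union> range (\<lambda>j. emb c (col_gen c j)))"
  (is "_ = convex_cone hull ?G")
proof
  show "emb c ` cone_K c \<subseteq> convex_cone hull ?G"
  proof
    fix x assume "x \<in> emb c ` cone_K c"
    then obtain y w wt where "x = emb c y" and w: "\<forall>i. w i \<ge> 0" "\<forall>j. wt j \<ge> 0"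
      and "\<forall>i j. y i j = (w i + wt j) / c i j"
      unfolding cone_K_def by blast
    then have x: "x = emb c (\<lambda>i j. (w i + wt j) / c i j)"
      by (simp add: emb_def)
    have "(\<Sum>k\<in>UNIV. w k *\<^sub>R emb c (row_gen c k)) $ (i, j) = sqrt (c i j) * (w i / c i j)"
      and "(\<Sum>k\<in>UNIV. wt k *\<^sub>R emb c (col_gen c k)) $ (i, j) = sqrt (c i j) * (wt j / c i j)" for i j
      by (simp_all add: row_gen_def col_gen_def mult_delta_right)
    then have "x = (\<Sum>k\<in>UNIV. w k *\<^sub>R emb c (row_gen c k)) + (\<Sum>k\<in>UNIV. wt k *\<^sub>R emb c (col_gen c k))"
      unfolding x vec_eq_iff by (simp add: add_divide_distrib distrib_left)
    also have "\<dots> \<in> convex_cone hull ?G"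
      using w by (intro convex_cone_hull_add convex_cone_sum[OF convex_cone_convex_cone_hull]
          convex_cone_hull_mul) (auto intro: hull_inc)
    finally show "x \<in> convex_cone hull ?G" .
  qed
  have "row_gen c i \<in> cone_K c" for i
    unfolding cone_K_def row_gen_def
    by (intro CollectI exI[of _ "\<lambda>k. if k = i then 1 else 0"] exI[of _ "\<lambda>_. 0"]) auto
  moreover have "col_gen c j \<in> cone_K c" for j
    unfolding cone_K_def col_gen_def
    by (intro CollectI exI[of _ "\<lambda>_. 0"] exI[of _ "\<lambda>k. if k = j then 1 else 0"]) auto
  ultimately show "convex_cone hull ?G \<subseteq> emb c ` cone_K c"
    by (intro hull_minimal convex_cone_emb_cone_K) auto
qed

lemma closed_emb_cone_K: "closed (emb c ` cone_K c)"
  unfolding emb_cone_K_eq_hull by (intro closed_convex_cone_hull) auto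

lemma proj_K_closest:
  assumes c_pos: "\<forall>i j. c i j > 0"
  shows proj_K_in_cone_K: "proj_K c x \<in> cone_K c"
    and "z \<in> cone_K c \<Longrightarrow> dist (emb c x) (emb c (proj_K c x)) \<le> dist (emb c x) (emb c z)"
proof -
  let ?S = "emb c ` cone_K c"
  have "?S \<noteq> {}"
    using cone_K_zero by blast
  then obtain y where y: "y \<in> cone_K c" "emb c y = closest_point ?S (emb c x)"
    using closest_point_in_set[OF closed_emb_cone_K[of c]] by (metis imageE)
  have "cnorm c (\<lambda>i j. x i j - y i j) \<le> cnorm c (\<lambda>i j. x i j - z i j)" if "z \<in> cone_K c" for z
  proof -
    have "dist (emb c x) (emb c y) \<le> dist (emb c x) (emb c z)"
      unfolding y(2) using that by (intro closest_point_le closed_emb_cone_K imageI)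
    then show ?thesis
      by (simp add: cnorm_emb[OF c_pos] emb_diff dist_norm)
  qed
  with y(1) have "\<exists>y. y \<in> cone_K c \<and>
      (\<forall>z\<in>cone_K c. cnorm c (\<lambda>i j. x i j - y i j) \<le> cnorm c (\<lambda>i j. x i j - z i j))"
    by blast
  then have "proj_K c x \<in> cone_K c \<and>
      (\<forall>z\<in>cone_K c. cnorm c (\<lambda>i j. x i j - proj_K c x i j) \<le> cnorm c (\<lambda>i j. x i j - z i j))"
    unfolding proj_K_def by (rule someI_ex)
  then show "proj_K c x \<in> cone_K c"
    and "z \<in> cone_K c \<Longrightarrow> dist (emb c x) (emb c (proj_K c x)) \<le> dist (emb c x) (emb c z)"
    by (auto simp: cnorm_emb[OF c_pos] emb_diff dist_norm)
qed

lemma emb_perp_K: "emb c (perp_K c x) = emb c x - emb c (proj_K c x)"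
  unfolding perp_K_def emb_diff ..

lemma W_perp_eq_norm:
  assumes "\<forall>i j. c i j > 0"
  shows "W_perp c x = norm (emb c (perp_K c x))"
  unfolding W_perp_def by (rule cnorm_emb[OF assms])

lemma cinner_perp_K_self:
  assumes "\<forall>i j. c i j > 0"
  shows "cinner c (perp_K c x) (perp_K c x) = (W_perp c x)\<^sup>2"
  by (simp add: cinner_emb[OF assms] W_perp_eq_norm[OF assms] power2_norm_eq_inner)

lemma W_perp_le:
  assumes "\<forall>i j. c i j > 0" and "z \<in> cone_K c"
  shows "W_perp c x \<le> norm (emb c x - emb c z)"
  using proj_K_closest(2)[OF assms] by (simp add: W_perp_eq_norm[OF assms(1)] emb_perp_K dist_norm)

lemma W_perp_lipschitz:
  assumes c_pos: "\<forall>i j. c i j > 0"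
  shows "\<bar>W_perp c x - W_perp c x'\<bar> \<le> norm (emb c x - emb c x')"
proof -
  have "W_perp c x \<le> W_perp c x' + norm (emb c x - emb c x')" for x x'
  proof -
    have "W_perp c x \<le> norm (emb c x - emb c (proj_K c x'))"
      by (rule W_perp_le[OF c_pos proj_K_in_cone_K[OF c_pos]])
    also have "\<dots> \<le> norm (emb c x' - emb c (proj_K c x')) + norm (emb c x - emb c x')"
      using norm_triangle_ineq[of "emb c x' - emb c (proj_K c x')" "emb c x - emb c x'"] by simp
    finally show ?thesis
      by (simp add: W_perp_eq_norm[OF c_pos] emb_perp_K)
  qed
  from this[of x x'] this[of x' x] show ?thesis
    by (simp add: norm_minus_commute)
qed

lemma perp_K_inner_le:
  assumes c_pos: "\<forall>i j. c i j > 0" and "z \<in> cone_K c"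
  shows "cinner c (perp_K c x) (\<lambda>i j. z i j - proj_K c x i j) \<le> 0"
proof -
  have "convex (emb c ` cone_K c)"
    using convex_cone_emb_cone_K[of c] by (simp add: convex_cone_def)
  moreover have "\<forall>v\<in>emb c ` cone_K c. dist (emb c x) (emb c (proj_K c x)) \<le> dist (emb c x) v"
    using proj_K_closest(2)[OF c_pos] by blast
  ultimately have "inner (emb c x - emb c (proj_K c x)) (emb c z - emb c (proj_K c x)) \<le> 0"
    using proj_K_in_cone_K[OF c_pos] assms(2)
    by (intro any_closest_point_dot[OF _ closed_emb_cone_K]) (auto intro: imageI)
  then show ?thesis
    by (simp add: cinner_emb[OF c_pos] emb_perp_K emb_diff)
qed

lemma perp_K_orthogonal:
  assumes c_pos: "\<forall>i j. c i j > 0"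
  shows "cinner c (perp_K c x) (proj_K c x) = 0"
proof -
  \<comment> \<open>test the variational inequality at the cone points 0 and 2 * proj_K c x\<close>
  have "cinner c (perp_K c x) (\<lambda>i j. 0 - proj_K c x i j) \<le> 0"
    using perp_K_inner_le[OF c_pos cone_K_zero] .
  moreover have "cinner c (perp_K c x) (\<lambda>i j. 2 * proj_K c x i j - proj_K c x i j) \<le> 0"
    by (intro perp_K_inner_le[OF c_pos] cone_K_scale proj_K_in_cone_K[OF c_pos]) simp
  ultimately show ?thesis
    by (simp add: cinner_def sum_negf)
qed

lemma perp_K_inner_cone_K_nonpos:
  assumes c_pos: "\<forall>i j. c i j > 0" and "k \<in> cone_K c"
  shows "cinner c (perp_K c x) k \<le> 0"
  using perp_K_inner_le[OF c_pos cone_K_add[OF proj_K_in_cone_K[OF c_pos, of x] assms(2)], of x]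
  by (simp add: perp_K_orthogonal[OF c_pos])

lemma perp_K_line_sums_nonpos:
  assumes c_pos: "\<forall>i j. c i j > 0"
  shows "(\<Sum>j\<in>UNIV. perp_K c x i0 j) \<le> 0" and "(\<Sum>i\<in>UNIV. perp_K c x i j0) \<le> 0"
proof -
  have "(\<Sum>i\<in>UNIV. w i * (\<Sum>j\<in>UNIV. perp_K c x i j)) + (\<Sum>j\<in>UNIV. wt j * (\<Sum>i\<in>UNIV. perp_K c x i j)) \<le> 0"
    if "\<forall>i. w i \<ge> 0" "\<forall>j. wt j \<ge> 0" for w wt
  proof -
    have "(\<lambda>i j. (w i + wt j) / c i j) \<in> cone_K c"
      unfolding cone_K_def using that by blast
    from perp_K_inner_cone_K_nonpos[OF c_pos this, of x] show ?thesis
      by (simp add: cinner_sym[of c "perp_K c x"] cinner_cone_K_generator[OF c_pos])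
  qed
  from this[of "\<lambda>i. if i = i0 then 1 else 0" "\<lambda>_. 0"] this[of "\<lambda>_. 0" "\<lambda>j. if j = j0 then 1 else 0"]
  show "(\<Sum>j\<in>UNIV. perp_K c x i0 j) \<le> 0" and "(\<Sum>i\<in>UNIV. perp_K c x i j0) \<le> 0"
    by (simp_all add: mult_delta_left)
qed

section \<open>Hall's theorem and a Birkhoff-type bound\<close>

lemma Hall_condition_delete_element:
  assumes surplus: "\<And>S. S \<subseteq> I \<Longrightarrow> S \<noteq> {} \<Longrightarrow> S \<noteq> I \<Longrightarrow> card S < card (\<Union>(N ` S))"
    and "i0 \<in> I" "T \<subseteq> I - {i0}"
  shows "card T \<le> card (\<Union>i\<in>T. N i - {a})"
proof (cases "T = {}")
  case False
  with assms have "card T < card (\<Union>(N ` T))"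
    by (intro surplus) auto
  moreover have "(\<Union>i\<in>T. N i - {a}) = \<Union>(N ` T) - {a}"
    by auto
  then have "card (\<Union>(N ` T)) - 1 \<le> card (\<Union>i\<in>T. N i - {a})"
    by (simp add: card_Diff_singleton_if)
  ultimately show ?thesis
    by linarith
qed simp

lemma Hall_condition_outside_critical:
  assumes hall: "\<And>S. S \<subseteq> I \<Longrightarrow> card S \<le> card (\<Union>(N ` S))"
    and fin: "finite I" "\<And>i. i \<in> I \<Longrightarrow> finite (N i)"
    and S: "S \<subseteq> I" "card (\<Union>(N ` S)) = card S"
    and T: "T \<subseteq> I - S"
  shows "card T \<le> card (\<Union>i\<in>T. N i - \<Union>(N ` S))"
proof -
  have fin_S: "finite S" and fin_T: "finite T"
    using fin(1) S(1) T by (auto intro: finite_subset)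
  have fin_U: "finite (\<Union>(N ` S))"
    using fin_S S(1) fin(2) by auto
  have "T \<inter> S = {}"
    using T by blast
  then have "card T + card S = card (T \<union> S)"
    by (simp add: card_Un_disjoint[OF fin_T fin_S])
  also have "\<dots> \<le> card (\<Union>(N ` (T \<union> S)))"
    using hall S(1) T by blast
  also have "\<dots> = card (\<Union>(N ` (T \<union> S)) - \<Union>(N ` S)) + card (\<Union>(N ` S))"
  proof -
    have sub: "\<Union>(N ` S) \<subseteq> \<Union>(N ` (T \<union> S))"
      by auto
    have "finite (\<Union>(N ` (T \<union> S)))"
      using fin_S fin_T S(1) T fin(2) by auto
    then show ?thesis
      using card_Diff_subset[OF fin_U sub] card_mono[OF _ sub] by linarith
  qed
  also have "\<Union>(N ` (T \<union> S)) - \<Union>(N ` S) = (\<Union>i\<in>T. N i - \<Union>(N ` S))"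
    by auto
  finally show ?thesis
    using S(2) by linarith
qed

lemma inj_on_if_disjoint_images:
  assumes f: "inj_on f A" and g: "inj_on g B" and disj: "f ` A \<inter> g ` B = {}"
  shows "inj_on (\<lambda>x. if x \<in> A then f x else g x) (A \<union> B)"
proof (rule inj_onI)
  fix x y assume x: "x \<in> A \<union> B" and y: "y \<in> A \<union> B"
    and eq: "(if x \<in> A then f x else g x) = (if y \<in> A then f y else g y)"
  have "f a \<noteq> g b" if "a \<in> A" "b \<in> B" for a b
    using disj that by blast
  with x y eq show "x = y"
    by (cases "x \<in> A"; cases "y \<in> A") (auto simp: inj_onD[OF f] inj_onD[OF g] dest: sym)
qed

lemma representatives_combine:
  assumes "S \<subseteq> I" and f1: "inj_on f1 S" "\<forall>i\<in>S. f1 i \<in> N i"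
    and f2: "inj_on f2 (I - S)" "\<forall>i\<in>I - S. f2 i \<in> N i - \<Union>(N ` S)"
  shows "\<exists>f. inj_on f I \<and> (\<forall>i\<in>I. f i \<in> N i)"
proof -
  let ?f = "\<lambda>i. if i \<in> S then f1 i else f2 i"
  have "f1 ` S \<subseteq> \<Union>(N ` S)" and "f2 ` (I - S) \<inter> \<Union>(N ` S) = {}"
    using f1(2) f2(2) by auto
  then have "inj_on ?f (S \<union> (I - S))"
    using f1(1) f2(1) by (intro inj_on_if_disjoint_images) auto
  then have "inj_on ?f I"
    using assms(1) by (simp add: Un_absorb1)
  moreover have "\<forall>i\<in>I. ?f i \<in> N i"
    using f1(2) f2(2) by simp
  ultimately show ?thesis
    by blast
qed

lemma representatives_extend:
  assumes "i0 \<in> I" "a \<in> N i0"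
    and g: "inj_on g (I - {i0})" "\<forall>i\<in>I - {i0}. g i \<in> N i - {a}"
  shows "\<exists>f. inj_on f I \<and> (\<forall>i\<in>I. f i \<in> N i)"
proof -
  have "inj_on (g(i0 := a)) (insert i0 (I - {i0}))"
    using g by (auto simp: inj_on_def)
  moreover have "insert i0 (I - {i0}) = I"
    using assms(1) by blast
  ultimately show ?thesis
    using g(2) assms(2) by (intro exI[of _ "g(i0 := a)"]) auto
qed

theorem Hall_marriage:
  fixes N :: "'a \<Rightarrow> 'b set"
  assumes "finite I" "\<And>i. i \<in> I \<Longrightarrow> finite (N i)"
    and "\<And>S. S \<subseteq> I \<Longrightarrow> card S \<le> card (\<Union>(N ` S))"
  shows "\<exists>f. inj_on f I \<and> (\<forall>i\<in>I. f i \<in> N i)"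
  using assms
proof (induction "card I" arbitrary: I N rule: less_induct)
  case less
  consider (empty) "I = {}"
    | (critical) S where "S \<subseteq> I" "S \<noteq> {}" "S \<noteq> I" "card (\<Union>(N ` S)) = card S"
    | (surplus) "I \<noteq> {}" "\<And>S. S \<subseteq> I \<Longrightarrow> S \<noteq> {} \<Longrightarrow> S \<noteq> I \<Longrightarrow> card S < card (\<Union>(N ` S))"
    using less.prems(3) by (metis le_neq_implies_less)
  then show ?case
  proof cases
    case empty
    then show ?thesis by simp
  next
    case (critical S)
    have "S \<subset> I" "I - S \<subset> I"
      using critical(1-3) by auto
    then have "card S < card I" "card (I - S) < card I"
      using less.prems(1) by (auto intro: psubset_card_mono)
    moreover have "finite S" "finite (I - S)"
      using critical(1) less.prems(1) finite_subset by auto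
    ultimately have "\<exists>f. inj_on f S \<and> (\<forall>i\<in>S. f i \<in> N i)"
      and "\<exists>f. inj_on f (I - S) \<and> (\<forall>i\<in>I - S. f i \<in> N i - \<Union>(N ` S))"
      using critical(1) less.prems
        Hall_condition_outside_critical[OF less.prems(3,1,2) critical(1,4)]
      by (intro less.hyps; force)+
    then show ?thesis
      using representatives_combine[OF critical(1)] by blast
  next
    case surplus
    then obtain i0 where i0: "i0 \<in> I"
      by blast
    then obtain a where a: "a \<in> N i0"
      using less.prems(3)[of "{i0}"] by fastforce
    have "card (I - {i0}) < card I"
      using less.prems(1) i0 by (rule card_Diff1_less)
    then have "\<exists>g. inj_on g (I - {i0}) \<and> (\<forall>i\<in>I - {i0}. g i \<in> N i - {a})"
      using less.prems(1,2) Hall_condition_delete_element[OF surplus(2) i0]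
      by (intro less.hyps) auto
    then show ?thesis
      using representatives_extend[of i0 I a N] i0 a by blast
  qed
qed

lemma permutation_in_support:
  fixes x :: "'n::finite \<Rightarrow> 'n \<Rightarrow> real"
  assumes nonneg: "\<forall>i j. x i j \<ge> 0" and rows: "\<forall>i. (\<Sum>j\<in>UNIV. x i j) = t"
    and cols: "\<forall>j. (\<Sum>i\<in>UNIV. x i j) = t" and "t > 0"
  obtains \<pi> where "\<pi> permutes UNIV" "\<forall>i. x i (\<pi> i) > 0"
proof -
  define N where "N i = {j. x i j > 0}" for i
  have "card S \<le> card (\<Union>(N ` S))" for S
  proof -
    let ?U = "\<Union>(N ` S)"
    have "t * card S = (\<Sum>i\<in>S. \<Sum>j\<in>UNIV. x i j)"
      using rows by (simp add: mult.commute)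
    also have "\<dots> = (\<Sum>i\<in>S. \<Sum>j\<in>?U. x i j)"
      using nonneg unfolding N_def
      by (intro sum.cong refl sum.mono_neutral_right) (auto simp: order.order_iff_strict)
    also have "\<dots> \<le> (\<Sum>i\<in>UNIV. \<Sum>j\<in>?U. x i j)"
      by (rule sum_mono2) (auto intro: sum_nonneg simp: nonneg)
    also have "\<dots> = (\<Sum>j\<in>?U. \<Sum>i\<in>UNIV. x i j)"
      by (rule sum.swap)
    also have "\<dots> = t * card ?U"
      using cols by (simp add: mult.commute)
    finally show ?thesis
      using \<open>t > 0\<close> by simp
  qed
  then obtain f where f: "inj f" "\<forall>i. f i \<in> N i"
    using Hall_marriage[of UNIV N] by auto
  then have "bij f"
    using finite_UNIV_inj_surj[of f] by (simp add: bij_def)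
  then have "f permutes UNIV"
    by (intro bij_imp_permutes) auto
  with f(2) show ?thesis
    unfolding N_def by (auto intro: that)
qed

definition pmat :: "('n::finite \<Rightarrow> 'n) \<Rightarrow> 'n \<Rightarrow> 'n \<Rightarrow> real" where
  "pmat \<pi> = (\<lambda>i j. if \<pi> i = j then 1 else 0)"

lemma pmat_row_sum: "(\<Sum>j\<in>UNIV. pmat \<pi> i j) = 1"
  by (simp add: pmat_def)

lemma pmat_col_sum:
  assumes "\<pi> permutes UNIV"
  shows "(\<Sum>i\<in>UNIV. pmat \<pi> i j) = 1"
proof -
  have "(\<Sum>i\<in>UNIV. pmat \<pi> i j) = (\<Sum>i\<in>UNIV. if inv \<pi> j = i then 1 else 0)"
    unfolding pmat_def using permutes_inv_eq[OF assms] by (intro sum.cong) auto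
  then show ?thesis
    by simp
qed

lemma pmat_weighted_sum: "(\<Sum>i\<in>UNIV. \<Sum>j\<in>UNIV. M i j * pmat \<pi> i j) = (\<Sum>i\<in>UNIV. M i (\<pi> i))"
  by (simp add: pmat_def mult_delta_right)

lemma doubly_stochastic_subtract_permutation:
  fixes x :: "'n::finite \<Rightarrow> 'n \<Rightarrow> real"
  assumes nonneg: "\<forall>i j. x i j \<ge> 0" and rows: "\<forall>i. (\<Sum>j\<in>UNIV. x i j) = t"
    and cols: "\<forall>j. (\<Sum>i\<in>UNIV. x i j) = t" and "t > 0"
  obtains \<pi> m where "\<pi> permutes UNIV" "0 < m" "m \<le> t" "\<forall>i j. x i j - m * pmat \<pi> i j \<ge> 0"
    "{(i, j). x i j - m * pmat \<pi> i j \<noteq> 0} \<subset> {(i, j). x i j \<noteq> 0}"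
proof -
  obtain \<pi> where \<pi>: "\<pi> permutes UNIV" "\<forall>i. x i (\<pi> i) > 0"
    using permutation_in_support[OF assms] .
  define m where "m = Min (range (\<lambda>i. x i (\<pi> i)))"
  have "m \<in> range (\<lambda>i. x i (\<pi> i))"
    unfolding m_def by (rule Min_in) auto
  then obtain i0 where i0: "x i0 (\<pi> i0) = m"
    by auto
  have m_le: "m \<le> x i (\<pi> i)" for i
    unfolding m_def by (rule Min_le) auto
  have "m > 0"
    using \<pi>(2) i0 by metis
  moreover have "x i0 (\<pi> i0) \<le> (\<Sum>j\<in>UNIV. x i0 j)"
    by (rule member_le_sum) (use nonneg in auto)
  then have "m \<le> t"
    using i0 rows by simp
  moreover have "\<forall>i j. x i j - m * pmat \<pi> i j \<ge> 0"
    using m_le nonneg by (simp add: pmat_def)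
  moreover have "{(i, j). x i j - m * pmat \<pi> i j \<noteq> 0} \<subset> {(i, j). x i j \<noteq> 0}"
  proof
    show "{(i, j). x i j - m * pmat \<pi> i j \<noteq> 0} \<subseteq> {(i, j). x i j \<noteq> 0}"
      using \<pi>(2) by (auto simp: pmat_def split: if_splits) (metis less_irrefl)
    have "(i0, \<pi> i0) \<in> {(i, j). x i j \<noteq> 0}" "(i0, \<pi> i0) \<notin> {(i, j). x i j - m * pmat \<pi> i j \<noteq> 0}"
      using i0 \<pi>(2)[rule_format, of i0] by (simp_all add: pmat_def)
    then show "{(i, j). x i j - m * pmat \<pi> i j \<noteq> 0} \<noteq> {(i, j). x i j \<noteq> 0}"
      by blast
  qed
  ultimately show ?thesis
    using \<pi>(1) that by blast
qed

lemma weighted_sum_le_permutation_bound: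
  fixes x M :: "'n::finite \<Rightarrow> 'n \<Rightarrow> real"
  assumes bound: "\<And>\<pi>. \<pi> permutes UNIV \<Longrightarrow> (\<Sum>i\<in>UNIV. M i (\<pi> i)) \<le> B"
    and "\<forall>i j. x i j \<ge> 0" "\<forall>i. (\<Sum>j\<in>UNIV. x i j) = t" "\<forall>j. (\<Sum>i\<in>UNIV. x i j) = t" "t \<ge> 0"
  shows "(\<Sum>i\<in>UNIV. \<Sum>j\<in>UNIV. M i j * x i j) \<le> t * B"
  using assms(2-)
proof (induction "card {(i, j). x i j \<noteq> 0}" arbitrary: x t rule: less_induct)
  case less
  note nonneg = less.prems(1) and rows = less.prems(2) and cols = less.prems(3)
  show ?case
  proof (cases "t = 0")
    case True
    then have "x i j = 0" for i j
      using rows nonneg sum_nonneg_eq_0_iff[of UNIV "x i"] by auto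
    then show ?thesis
      using True by simp
  next
    case False
    with less.prems(4) have "t > 0"
      by simp
    then obtain \<pi> m where \<pi>: "\<pi> permutes UNIV" and m: "0 < m" "m \<le> t"
      and nonneg': "\<forall>i j. x i j - m * pmat \<pi> i j \<ge> 0"
      and smaller: "{(i, j). x i j - m * pmat \<pi> i j \<noteq> 0} \<subset> {(i, j). x i j \<noteq> 0}"
      by (rule doubly_stochastic_subtract_permutation[OF nonneg rows cols])
    define x' where "x' i j = x i j - m * pmat \<pi> i j" for i j
    have rows': "\<forall>i. (\<Sum>j\<in>UNIV. x' i j) = t - m" and cols': "\<forall>j. (\<Sum>i\<in>UNIV. x' i j) = t - m"
      using rows cols
      by (simp_all add: x'_def sum_subtractf pmat_row_sum pmat_col_sum[OF \<pi>] flip: sum_distrib_left)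
    have "card {(i, j). x' i j \<noteq> 0} < card {(i, j). x i j \<noteq> 0}"
      unfolding x'_def by (rule psubset_card_mono[OF _ smaller]) simp
    moreover have "\<forall>i j. x' i j \<ge> 0"
      unfolding x'_def using nonneg' .
    ultimately have IH: "(\<Sum>i\<in>UNIV. \<Sum>j\<in>UNIV. M i j * x' i j) \<le> (t - m) * B"
      using rows' cols' m(2) by (intro less.hyps) simp_all
    have "M i j * x i j = M i j * x' i j + m * (M i j * pmat \<pi> i j)" for i j
      by (simp add: x'_def algebra_simps)
    then have "(\<Sum>i\<in>UNIV. \<Sum>j\<in>UNIV. M i j * x i j)
        = (\<Sum>i\<in>UNIV. \<Sum>j\<in>UNIV. M i j * x' i j) + m * (\<Sum>i\<in>UNIV. M i (\<pi> i))"
      by (simp add: sum.distrib sum_distrib_left flip: pmat_weighted_sum)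
    moreover have "m * (\<Sum>i\<in>UNIV. M i (\<pi> i)) \<le> m * B"
      using bound[OF \<pi>] m(1) by simp
    ultimately show ?thesis
      using IH by (simp add: algebra_simps)
  qed
qed

lemma substochastic_le_doubly_stochastic:
  fixes y :: "'n::finite \<Rightarrow> 'n \<Rightarrow> real"
  assumes nonneg: "\<forall>i j. y i j \<ge> 0" and rows: "\<forall>i. (\<Sum>j\<in>UNIV. y i j) \<le> 1"
    and cols: "\<forall>j. (\<Sum>i\<in>UNIV. y i j) \<le> 1"
  obtains z where "\<forall>i j. y i j \<le> z i j" "\<forall>i. (\<Sum>j\<in>UNIV. z i j) = 1" "\<forall>j. (\<Sum>i\<in>UNIV. z i j) = 1"
proof -
  define r where "r i = 1 - (\<Sum>j\<in>UNIV. y i j)" for i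
  define s where "s j = 1 - (\<Sum>i\<in>UNIV. y i j)" for j
  define D where "D = (\<Sum>i\<in>UNIV. r i)"
  have D_cols: "D = (\<Sum>j\<in>UNIV. s j)"
    unfolding D_def r_def s_def by (simp add: sum_subtractf sum.swap[of y])
  have r: "r i \<ge> 0" and s: "s j \<ge> 0" for i j
    using rows cols by (simp_all add: r_def s_def)
  show ?thesis
  proof (cases "D = 0")
    case True
    then have "r i = 0" "s j = 0" for i j
      using r s D_cols by (simp_all add: D_def sum_nonneg_eq_0_iff)
    then show ?thesis
      by (intro that[of y]) (simp_all add: r_def s_def)
  next
    case False
    then have "D > 0"
      using r by (simp add: D_def order.not_eq_order_implies_strict sum_nonneg)
    define z where "z i j = y i j + r i * s j / D" for i j
    have "y i j \<le> z i j" for i j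
      using r s \<open>D > 0\<close> by (simp add: z_def)
    moreover have "(\<Sum>j\<in>UNIV. z i j) = 1" for i
      using \<open>D > 0\<close> by (simp add: z_def sum.distrib r_def D_cols flip: sum_divide_distrib sum_distrib_left)
    moreover have "(\<Sum>i\<in>UNIV. z i j) = 1" for j
      using \<open>D > 0\<close> by (simp add: z_def sum.distrib s_def D_def flip: sum_divide_distrib sum_distrib_right)
    ultimately show ?thesis
      using that by blast
  qed
qed

lemma perm_matrices_pmat: "s \<in> perm_matrices \<longleftrightarrow> (\<exists>\<pi>. \<pi> permutes UNIV \<and> s = pmat \<pi>)"
  unfolding perm_matrices_def pmat_def by simp

lemma cinner_pmat: "cinner c Q (pmat \<pi>) = (\<Sum>i\<in>UNIV. c i (\<pi> i) * Q i (\<pi> i))"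
  unfolding cinner_def using pmat_weighted_sum[of "\<lambda>i j. c i j * Q i j" \<pi>] by simp

lemma finite_perm_matrices: "finite (perm_matrices :: ('n::finite \<Rightarrow> 'n \<Rightarrow> real) set)"
proof -
  have "perm_matrices = pmat ` {\<pi>. \<pi> permutes (UNIV :: 'n set)}"
    using perm_matrices_pmat by blast
  moreover have "finite {\<pi>. \<pi> permutes (UNIV :: 'n set)}"
    by (rule finite_permutations) simp
  ultimately show ?thesis
    by (metis finite_imageI)
qed

lemma finite_maxweight_set: "finite (maxweight_set c Q)"
  unfolding maxweight_set_def by (rule finite_subset[OF _ finite_perm_matrices]) auto

lemma maxweight_set_nonempty: "maxweight_set c Q \<noteq> {}"
proof -
  have "perm_matrices \<noteq> {}"
    using perm_matrices_pmat permutes_id by blast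
  then have "Max (cinner c Q ` perm_matrices) \<in> cinner c Q ` perm_matrices"
    by (intro Max_in finite_imageI finite_perm_matrices) simp
  then obtain s where "s \<in> perm_matrices" "cinner c Q s = Max (cinner c Q ` perm_matrices)"
    by auto
  then have "s \<in> maxweight_set c Q"
    unfolding maxweight_set_def by (auto intro: Max_ge finite_perm_matrices)
  then show ?thesis
    by blast
qed

lemma perm_matrix_entry: "s \<in> perm_matrices \<Longrightarrow> s i j = 0 \<or> s i j = 1"
  unfolding perm_matrices_def by auto

lemma perm_matrix_line_sums:
  assumes "s \<in> perm_matrices"
  shows "(\<Sum>j\<in>UNIV. s i j) = 1" and "(\<Sum>i\<in>UNIV. s i j) = 1"
  using assms pmat_row_sum pmat_col_sum unfolding perm_matrices_pmat by auto

lemma maxweight_dominates_substochastic: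
  fixes c Q y :: "'n::finite \<Rightarrow> 'n \<Rightarrow> real"
  assumes c_pos: "\<forall>i j. c i j > 0" and Q_nonneg: "\<forall>i j. Q i j \<ge> 0" and s: "s \<in> maxweight_set c Q"
    and "\<forall>i j. y i j \<ge> 0" "\<forall>i. (\<Sum>j\<in>UNIV. y i j) \<le> 1" "\<forall>j. (\<Sum>i\<in>UNIV. y i j) \<le> 1"
  shows "cinner c Q y \<le> cinner c Q s"
proof -
  obtain z where z: "\<forall>i j. y i j \<le> z i j" "\<forall>i. (\<Sum>j\<in>UNIV. z i j) = 1" "\<forall>j. (\<Sum>i\<in>UNIV. z i j) = 1"
    using substochastic_le_doubly_stochastic[OF assms(4-6)] by blast
  have "cinner c Q y \<le> cinner c Q z"
    unfolding cinner_def using c_pos Q_nonneg z(1)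
    by (intro sum_mono mult_left_mono) (auto simp: less_imp_le)
  also have "\<dots> = (\<Sum>i\<in>UNIV. \<Sum>j\<in>UNIV. (c i j * Q i j) * z i j)"
    unfolding cinner_def ..
  also have "\<dots> \<le> 1 * cinner c Q s"
  proof (rule weighted_sum_le_permutation_bound)
    fix \<pi> :: "'n \<Rightarrow> 'n"
    assume "\<pi> permutes UNIV"
    then have "pmat \<pi> \<in> perm_matrices"
      unfolding perm_matrices_pmat by blast
    then show "(\<Sum>i\<in>UNIV. c i (\<pi> i) * Q i (\<pi> i)) \<le> cinner c Q s"
      using s unfolding maxweight_set_def by (simp flip: cinner_pmat)
  next
    show "\<forall>i j. z i j \<ge> 0"
      using z(1) assms(4) by (meson order_trans)
  qed (use z in simp_all)
  finally show ?thesis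
    by simp
qed

lemma set_step_pmf:
  "set_pmf (step_pmf c p Q)
     = (\<lambda>a i j. real (a (i, j))) ` set_pmf (Pi_pmf UNIV 0 (\<lambda>(i, j). p i j)) \<times> maxweight_set c Q"
  unfolding step_pmf_def by (simp add: set_pmf_of_set[OF maxweight_set_nonempty finite_maxweight_set])

lemma step_pmf_support:
  assumes "\<forall>i j. set_pmf (p i j) \<subseteq> {0..A_max}" and "AS \<in> set_pmf (step_pmf c p Q)"
  shows "snd AS \<in> maxweight_set c Q" and "0 \<le> fst AS i j" and "fst AS i j \<le> real A_max"
proof -
  obtain a where a: "a \<in> set_pmf (Pi_pmf UNIV 0 (\<lambda>(i, j). p i j))" "fst AS = (\<lambda>i j. real (a (i, j)))"
    and "snd AS \<in> maxweight_set c Q"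
    using assms(2) unfolding set_step_pmf by auto
  moreover have "a (i, j) \<in> set_pmf (p i j)"
    using a(1) by (simp add: set_Pi_pmf PiE_dflt_def)
  then have "a (i, j) \<le> A_max"
    using assms(1)[rule_format, of i j] by auto
  ultimately show "snd AS \<in> maxweight_set c Q" and "0 \<le> fst AS i j" and "fst AS i j \<le> real A_max"
    by auto
qed

lemma finite_set_step_pmf:
  assumes "\<forall>i j. set_pmf (p i j) \<subseteq> {0..A_max}"
  shows "finite (set_pmf (step_pmf c p Q))"
proof -
  have "finite (set_pmf (p i j))" for i j
    using assms finite_subset[of _ "{0..A_max}"] by blast
  then have "finite (set_pmf (Pi_pmf UNIV 0 (\<lambda>(i, j). p i j)))"
    by (auto simp: set_Pi_pmf intro!: finite_PiE_dflt)
  then show ?thesis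
    unfolding set_step_pmf by (intro finite_cartesian_product finite_imageI finite_maxweight_set)
qed

lemma expectation_step_pmf_arrival:
  "measure_pmf.expectation (step_pmf c p Q) (\<lambda>AS. fst AS i j) = measure_pmf.expectation (p i j) real"
proof -
  let ?A = "map_pmf (\<lambda>a i j. real (a (i, j))) (Pi_pmf UNIV 0 (\<lambda>(i, j). p i j))"
  have "measure_pmf.expectation (step_pmf c p Q) (\<lambda>AS. fst AS i j)
      = measure_pmf.expectation (map_pmf fst (pair_pmf ?A (pmf_of_set (maxweight_set c Q)))) (\<lambda>a. a i j)"
    unfolding step_pmf_def by simp
  also have "\<dots> = measure_pmf.expectation (Pi_pmf UNIV 0 (\<lambda>(i, j). p i j)) (\<lambda>a. real (a (i, j)))"
    by (simp add: map_fst_pair_pmf)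
  also have "\<dots> = measure_pmf.expectation (map_pmf (\<lambda>a. a (i, j)) (Pi_pmf UNIV 0 (\<lambda>(i, j). p i j))) real"
    by simp
  also have "map_pmf (\<lambda>a. a (i, j)) (Pi_pmf UNIV 0 (\<lambda>(i, j). p i j)) = p i j"
    by (subst Pi_pmf_component) auto
  finally show ?thesis .
qed

lemma expectation_cinner_arrival:
  fixes c \<nu> x :: "'n::finite \<Rightarrow> 'n \<Rightarrow> real" and p :: "'n \<Rightarrow> 'n \<Rightarrow> nat pmf"
  assumes supp: "\<forall>i j. set_pmf (p i j) \<subseteq> {0..A_max}"
    and mean: "\<forall>i j. measure_pmf.expectation (p i j) real = (1 - \<epsilon>) * \<nu> i j"
  shows "measure_pmf.expectation (step_pmf c p Q) (\<lambda>AS. cinner c x (fst AS)) = (1 - \<epsilon>) * cinner c x \<nu>"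
proof -
  have "measure_pmf.expectation (step_pmf c p Q) (\<lambda>AS. cinner c x (fst AS))
      = (\<Sum>i\<in>UNIV. \<Sum>j\<in>UNIV. c i j * x i j * measure_pmf.expectation (step_pmf c p Q) (\<lambda>AS. fst AS i j))"
    unfolding cinner_def
    by (simp add: integral_sum integrable_measure_pmf_finite[OF finite_set_step_pmf[OF supp]])
  also have "\<dots> = (1 - \<epsilon>) * cinner c x \<nu>"
    by (simp add: expectation_step_pmf_arrival mean cinner_def sum_distrib_left algebra_simps)
  finally show ?thesis .
qed

lemma nonneg_Nats: "(x::real) \<in> \<nat> \<Longrightarrow> x \<ge> 0"
  by (metis Nats_cases of_nat_0_le_iff)

lemma Nats_less_one: "(x::real) \<in> \<nat> \<Longrightarrow> x < 1 \<Longrightarrow> x = 0"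
  by (metis Nats_cases of_nat_0 of_nat_1 of_nat_less_iff less_one)

lemma next_Q_increment: "next_Q Q a s i j - Q i j = a i j - s i j + unused Q a s i j"
  unfolding next_Q_def by simp

lemma next_Q_increment_bound:
  assumes "Q i j \<in> \<nat>" "0 \<le> a i j" "a i j \<le> real A_max" "s \<in> perm_matrices"
  shows "\<bar>next_Q Q a s i j - Q i j\<bar> \<le> real A_max + 1"
  using assms nonneg_Nats[OF assms(1)] perm_matrix_entry[OF assms(4), of i j]
  by (auto simp: next_Q_def unused_def max_def abs_if)

lemma unused_imp_empty_queue:
  assumes "Q i j \<in> \<nat>" "0 \<le> a i j" "s \<in> perm_matrices" "unused Q a s i j \<noteq> 0"
  shows "Q i j = 0"
proof -
  have "Q i j < 1"
    using assms(2,4) perm_matrix_entry[OF assms(3), of i j]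
    by (auto simp: unused_def max_def split: if_splits)
  then show ?thesis
    using Nats_less_one[OF assms(1)] by blast
qed

lemma norm_emb_le:
  assumes c_pos: "\<forall>i j. c i j > 0" and bound: "\<forall>i j. \<bar>x i j\<bar> \<le> B"
  shows "norm (emb c x) \<le> B * sqrt (\<Sum>i\<in>UNIV. \<Sum>j\<in>UNIV. c i j)"
proof -
  have "B \<ge> 0"
    using bound by (meson abs_ge_zero order_trans)
  have "cinner c x x \<le> (\<Sum>i\<in>UNIV. \<Sum>j\<in>UNIV. B\<^sup>2 * c i j)"
    unfolding cinner_def
  proof (intro sum_mono)
    fix i j
    have "x i j * x i j \<le> B\<^sup>2"
      using bound abs_le_square_iff[of "x i j" B] \<open>B \<ge> 0\<close> by (simp add: power2_eq_square)
    then show "c i j * x i j * x i j \<le> B\<^sup>2 * c i j"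
      using c_pos by (simp add: mult.assoc mult.commute mult_left_mono less_imp_le)
  qed
  then have "sqrt (cinner c x x) \<le> sqrt (B\<^sup>2 * (\<Sum>i\<in>UNIV. \<Sum>j\<in>UNIV. c i j))"
    by (simp add: sum_distrib_left)
  then show ?thesis
    using \<open>B \<ge> 0\<close> cnorm_emb[OF c_pos] by (simp add: cnorm_def real_sqrt_mult)
qed

(* Not the paper's n sqrt(c_max) A_max: an entry of Q can also drop by one through service. *)
definition increment_bound :: "('n::finite \<Rightarrow> 'n \<Rightarrow> real) \<Rightarrow> nat \<Rightarrow> real" where
  "increment_bound c A_max = (real A_max + 1) * sqrt (\<Sum>i\<in>UNIV. \<Sum>j\<in>UNIV. c i j)"

lemma increment_bound_pos: "\<forall>i j. c i j > 0 \<Longrightarrow> increment_bound c A_max > 0"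
  unfolding increment_bound_def by (simp add: sum_pos)

lemma delta_W_perp_bound:
  fixes c Q :: "'n::finite \<Rightarrow> 'n \<Rightarrow> real" and p :: "'n \<Rightarrow> 'n \<Rightarrow> nat pmf"
  assumes c_pos: "\<forall>i j. c i j > 0" and supp: "\<forall>i j. set_pmf (p i j) \<subseteq> {0..A_max}"
    and Q_Nats: "\<forall>i j. Q i j \<in> \<nat>" and AS: "AS \<in> set_pmf (step_pmf c p Q)"
  shows "\<bar>delta_W_perp c Q AS\<bar> \<le> increment_bound c A_max"
proof -
  let ?Q' = "next_Q Q (fst AS) (snd AS)"
  have "snd AS \<in> perm_matrices"
    using step_pmf_support(1)[OF supp AS] unfolding maxweight_set_def by simp
  then have "\<forall>i j. \<bar>?Q' i j - Q i j\<bar> \<le> real A_max + 1"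
    using Q_Nats step_pmf_support(2,3)[OF supp AS] by (blast intro: next_Q_increment_bound)
  then have "norm (emb c ?Q' - emb c Q) \<le> increment_bound c A_max"
    using norm_emb_le[OF c_pos, of "\<lambda>i j. ?Q' i j - Q i j"] by (simp add: emb_diff increment_bound_def)
  then show ?thesis
    unfolding delta_W_perp_def using W_perp_lipschitz[OF c_pos, of ?Q' Q] by linarith
qed

section \<open>Drift of W_perp\<close>

lemma perp_K_perturbation_substochastic:
  fixes c \<nu> Q :: "'n::finite \<Rightarrow> 'n \<Rightarrow> real"
  assumes c_pos: "\<forall>i j. c i j > 0"
    and \<nu>_rows: "\<forall>i. (\<Sum>j\<in>UNIV. \<nu> i j) = 1" and \<nu>_cols: "\<forall>j. (\<Sum>i\<in>UNIV. \<nu> i j) = 1"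
    and \<delta>_pos: "\<delta> > 0" and \<delta>_le: "\<forall>i j. \<delta> \<le> \<nu> i j * sqrt (c i j)" and W_pos: "W_perp c Q > 0"
  defines "y \<equiv> \<lambda>i j. \<nu> i j + \<delta> / W_perp c Q * perp_K c Q i j"
  shows "\<forall>i j. y i j \<ge> 0" and "\<forall>i. (\<Sum>j\<in>UNIV. y i j) \<le> 1" and "\<forall>j. (\<Sum>i\<in>UNIV. y i j) \<le> 1"
proof -
  let ?W = "W_perp c Q" and ?q = "perp_K c Q"
  show "\<forall>i j. y i j \<ge> 0"
  proof (intro allI)
    fix i j
    have q_le: "\<bar>?q i j\<bar> * sqrt (c i j) \<le> ?W"
      using component_le_norm_cart[of "emb c ?q" "(i, j)"] c_pos
      by (simp add: W_perp_eq_norm[OF c_pos] abs_mult mult.commute less_imp_le)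
    have "\<nu> i j * sqrt (c i j) > 0"
      using \<delta>_le \<delta>_pos by (meson less_le_trans)
    moreover have "sqrt (c i j) > 0"
      using c_pos by simp
    ultimately have "\<nu> i j \<ge> 0"
      by (simp add: zero_less_mult_iff)
    have "\<delta> * \<bar>?q i j\<bar> \<le> \<nu> i j * sqrt (c i j) * \<bar>?q i j\<bar>"
      using \<delta>_le by (simp add: mult_right_mono)
    also have "\<dots> = \<nu> i j * (\<bar>?q i j\<bar> * sqrt (c i j))"
      by (simp add: algebra_simps)
    also have "\<dots> \<le> \<nu> i j * ?W"
      using \<open>\<nu> i j \<ge> 0\<close> q_le by (rule mult_left_mono[rotated])
    finally have "\<delta> / ?W * \<bar>?q i j\<bar> \<le> \<nu> i j"
      using W_pos by (simp add: field_simps)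
    moreover have "- (\<delta> / ?W * \<bar>?q i j\<bar>) \<le> \<delta> / ?W * ?q i j"
      using \<delta>_pos W_pos by (simp add: abs_if)
    ultimately show "y i j \<ge> 0"
      unfolding y_def by linarith
  qed
  have "\<delta> / ?W \<ge> 0"
    using \<delta>_pos W_pos by simp
  then have "\<delta> / ?W * (\<Sum>j\<in>UNIV. ?q i j) \<le> 0" and "\<delta> / ?W * (\<Sum>i\<in>UNIV. ?q i j) \<le> 0" for i j
    using perp_K_line_sums_nonpos[OF c_pos] by (blast intro: mult_nonneg_nonpos)+
  moreover have "(\<Sum>j\<in>UNIV. y i j) = 1 + \<delta> / ?W * (\<Sum>j\<in>UNIV. ?q i j)"
    and "(\<Sum>i\<in>UNIV. y i j) = 1 + \<delta> / ?W * (\<Sum>i\<in>UNIV. ?q i j)" for i j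
    using \<nu>_rows \<nu>_cols by (simp_all add: y_def sum.distrib sum_distrib_left)
  ultimately show "\<forall>i. (\<Sum>j\<in>UNIV. y i j) \<le> 1" and "\<forall>j. (\<Sum>i\<in>UNIV. y i j) \<le> 1"
    by simp_all
qed

lemma maxweight_perp_gap:
  fixes c \<nu> Q s :: "'n::finite \<Rightarrow> 'n \<Rightarrow> real"
  assumes c_pos: "\<forall>i j. c i j > 0"
    and \<nu>_rows: "\<forall>i. (\<Sum>j\<in>UNIV. \<nu> i j) = 1" and \<nu>_cols: "\<forall>j. (\<Sum>i\<in>UNIV. \<nu> i j) = 1"
    and \<delta>_pos: "\<delta> > 0" and \<delta>_le: "\<forall>i j. \<delta> \<le> \<nu> i j * sqrt (c i j)"
    and Q_nonneg: "\<forall>i j. Q i j \<ge> 0" and W_pos: "W_perp c Q > 0" and s: "s \<in> maxweight_set c Q"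
  shows "cinner c (perp_K c Q) \<nu> + \<delta> * W_perp c Q \<le> cinner c (perp_K c Q) s"
proof -
  let ?W = "W_perp c Q" and ?q = "perp_K c Q" and ?p = "proj_K c Q"
  have Q_split: "Q = (\<lambda>i j. ?p i j + ?q i j)"
    by (simp add: perp_K_def)
  have "cinner c Q ?q = ?W\<^sup>2"
    by (subst Q_split) (simp add: cinner_add_left cinner_sym[of c ?p] perp_K_orthogonal[OF c_pos]
        cinner_perp_K_self[OF c_pos])
  moreover have "cinner c Q (\<lambda>i j. \<nu> i j + \<delta> / ?W * ?q i j) = cinner c Q \<nu> + \<delta> / ?W * cinner c Q ?q"
    by (simp only: cinner_add_right cinner_scale_right)
  ultimately have "cinner c Q (\<lambda>i j. \<nu> i j + \<delta> / ?W * ?q i j) = cinner c Q \<nu> + \<delta> * ?W"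
    using W_pos by (simp add: power2_eq_square)
  moreover have "cinner c Q (\<lambda>i j. \<nu> i j + \<delta> / ?W * ?q i j) \<le> cinner c Q s"
    using perp_K_perturbation_substochastic[OF c_pos \<nu>_rows \<nu>_cols \<delta>_pos \<delta>_le W_pos]
    by (intro maxweight_dominates_substochastic[OF c_pos Q_nonneg s]) simp_all
  moreover have "cinner c ?p s = cinner c ?p \<nu>"
    using s \<nu>_rows \<nu>_cols perm_matrix_line_sums unfolding maxweight_set_def
    by (intro cinner_cone_K_doubly_stochastic[OF c_pos proj_K_in_cone_K[OF c_pos]]) auto
  moreover have "cinner c ?q z = cinner c Q z - cinner c ?p z" for z
    unfolding perp_K_def by (rule cinner_diff_left)
  ultimately show ?thesis
    by simp
qed

lemma diff_le_diff_squares_div: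
  fixes u W :: real
  assumes "W > 0"
  shows "u - W \<le> (u\<^sup>2 - W\<^sup>2) / (2 * W)"
proof -
  have "2 * W * (u - W) \<le> u\<^sup>2 - W\<^sup>2"
    using zero_le_power2[of "u - W"] by (simp add: power2_eq_square algebra_simps)
  then show ?thesis
    using assms by (simp add: pos_le_divide_eq mult.commute)
qed

lemma W_perp_step_le:
  fixes Q Q' :: "'n::finite \<Rightarrow> 'n \<Rightarrow> real"
  assumes c_pos: "\<forall>i j. c i j > 0" and W_pos: "W_perp c Q > 0"
  defines "\<Delta> \<equiv> \<lambda>i j. Q' i j - Q i j"
  shows "W_perp c Q' - W_perp c Q
           \<le> (2 * cinner c (perp_K c Q) \<Delta> + (norm (emb c \<Delta>))\<^sup>2) / (2 * W_perp c Q)"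
proof -
  let ?W = "W_perp c Q" and ?q = "emb c (perp_K c Q)"
  have "W_perp c Q' \<le> norm (emb c Q' - emb c (proj_K c Q))"
    by (rule W_perp_le[OF c_pos proj_K_in_cone_K[OF c_pos]])
  also have "emb c Q' - emb c (proj_K c Q) = ?q + emb c \<Delta>"
    by (simp add: \<Delta>_def emb_perp_K emb_diff)
  finally have "W_perp c Q' - ?W \<le> norm (?q + emb c \<Delta>) - ?W"
    by simp
  also have "\<dots> \<le> ((norm (?q + emb c \<Delta>))\<^sup>2 - ?W\<^sup>2) / (2 * ?W)"
    by (rule diff_le_diff_squares_div[OF W_pos])
  also have "(norm (?q + emb c \<Delta>))\<^sup>2 - ?W\<^sup>2 = 2 * inner ?q (emb c \<Delta>) + (norm (emb c \<Delta>))\<^sup>2"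
    by (simp add: W_perp_eq_norm[OF c_pos] power2_norm_eq_inner inner_add_left inner_add_right inner_commute)
  finally show ?thesis
    by (simp add: cinner_emb[OF c_pos])
qed

lemma perp_K_inner_unused_nonpos:
  assumes c_pos: "\<forall>i j. c i j > 0" and Q_Nats: "\<forall>i j. Q i j \<in> \<nat>"
    and a_nonneg: "\<forall>i j. 0 \<le> a i j" and s: "s \<in> perm_matrices"
  shows "cinner c (perp_K c Q) (unused Q a s) \<le> 0"
  unfolding cinner_def
proof (intro sum_nonpos)
  fix i j
  show "c i j * perp_K c Q i j * unused Q a s i j \<le> 0"
  proof (cases "unused Q a s i j = 0")
    case False
    then have "Q i j = 0"
      using Q_Nats a_nonneg s by (blast intro: unused_imp_empty_queue)
    then have "perp_K c Q i j \<le> 0"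
      using cone_K_nonneg[OF c_pos proj_K_in_cone_K[OF c_pos]] by (simp add: perp_K_def)
    moreover have "unused Q a s i j \<ge> 0"
      by (simp add: unused_def)
    ultimately show ?thesis
      using c_pos by (intro mult_nonpos_nonneg mult_nonneg_nonpos) (simp_all add: less_imp_le)
  qed simp
qed

lemma delta_W_perp_le:
  fixes c \<nu> Q :: "'n::finite \<Rightarrow> 'n \<Rightarrow> real" and p :: "'n \<Rightarrow> 'n \<Rightarrow> nat pmf"
  assumes c_pos: "\<forall>i j. c i j > 0"
    and \<nu>_rows: "\<forall>i. (\<Sum>j\<in>UNIV. \<nu> i j) = 1" and \<nu>_cols: "\<forall>j. (\<Sum>i\<in>UNIV. \<nu> i j) = 1"
    and \<delta>_pos: "\<delta> > 0" and \<delta>_le: "\<forall>i j. \<delta> \<le> \<nu> i j * sqrt (c i j)"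
    and supp: "\<forall>i j. set_pmf (p i j) \<subseteq> {0..A_max}" and Q_Nats: "\<forall>i j. Q i j \<in> \<nat>"
    and W_pos: "W_perp c Q > 0" and AS: "AS \<in> set_pmf (step_pmf c p Q)"
  shows "delta_W_perp c Q AS \<le> (2 * (cinner c (perp_K c Q) (fst AS) - cinner c (perp_K c Q) \<nu>
            - \<delta> * W_perp c Q) + (increment_bound c A_max)\<^sup>2) / (2 * W_perp c Q)"
proof -
  let ?q = "perp_K c Q" and ?a = "fst AS" and ?s = "snd AS"
  let ?\<Delta> = "\<lambda>i j. next_Q Q ?a ?s i j - Q i j"
  have s: "?s \<in> maxweight_set c Q" and a: "\<forall>i j. 0 \<le> ?a i j \<and> ?a i j \<le> real A_max"
    using step_pmf_support[OF supp AS] by auto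
  then have s_perm: "?s \<in> perm_matrices"
    unfolding maxweight_set_def by simp
  have Q_nonneg: "\<forall>i j. Q i j \<ge> 0"
    using Q_Nats nonneg_Nats by blast
  have "cinner c ?q ?\<Delta> = cinner c ?q ?a - cinner c ?q ?s + cinner c ?q (unused Q ?a ?s)"
    by (simp only: next_Q_increment cinner_add_right cinner_diff_right)
  also have "\<dots> \<le> cinner c ?q ?a - cinner c ?q \<nu> - \<delta> * W_perp c Q"
    using maxweight_perp_gap[OF c_pos \<nu>_rows \<nu>_cols \<delta>_pos \<delta>_le Q_nonneg W_pos s]
      perp_K_inner_unused_nonpos[OF c_pos Q_Nats _ s_perm, of ?a] a by simp
  finally have inner_le: "cinner c ?q ?\<Delta> \<le> cinner c ?q ?a - cinner c ?q \<nu> - \<delta> * W_perp c Q" .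
  have "norm (emb c ?\<Delta>) \<le> increment_bound c A_max"
    unfolding increment_bound_def using Q_Nats a s_perm
    by (intro norm_emb_le[OF c_pos]) (blast intro: next_Q_increment_bound)
  then have "(norm (emb c ?\<Delta>))\<^sup>2 \<le> (increment_bound c A_max)\<^sup>2"
    by (simp add: power_mono)
  with inner_le have "(2 * cinner c ?q ?\<Delta> + (norm (emb c ?\<Delta>))\<^sup>2) / (2 * W_perp c Q)
      \<le> (2 * (cinner c ?q ?a - cinner c ?q \<nu> - \<delta> * W_perp c Q) + (increment_bound c A_max)\<^sup>2) / (2 * W_perp c Q)"
    using W_pos by (intro divide_right_mono) auto
  then show ?thesis
    unfolding delta_W_perp_def using W_perp_step_le[OF c_pos W_pos, of "next_Q Q ?a ?s"] by linarith
qed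

lemma expected_delta_W_perp_le:
  fixes c \<nu> Q :: "'n::finite \<Rightarrow> 'n \<Rightarrow> real" and p :: "'n \<Rightarrow> 'n \<Rightarrow> nat pmf"
  assumes c_pos: "\<forall>i j. c i j > 0"
    and \<nu>_rows: "\<forall>i. (\<Sum>j\<in>UNIV. \<nu> i j) = 1" and \<nu>_cols: "\<forall>j. (\<Sum>i\<in>UNIV. \<nu> i j) = 1"
    and \<delta>_pos: "\<delta> > 0" and \<delta>_le: "\<forall>i j. \<delta> \<le> \<nu> i j * sqrt (c i j)"
    and supp: "\<forall>i j. set_pmf (p i j) \<subseteq> {0..A_max}"
    and mean: "\<forall>i j. measure_pmf.expectation (p i j) real = (1 - \<epsilon>) * \<nu> i j" and "\<epsilon> \<ge> 0"
    and Q_Nats: "\<forall>i j. Q i j \<in> \<nat>" and W_pos: "W_perp c Q > 0"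
  shows "measure_pmf.expectation (step_pmf c p Q) (delta_W_perp c Q)
           \<le> \<epsilon> * norm (emb c \<nu>) - \<delta> + (increment_bound c A_max)\<^sup>2 / (2 * W_perp c Q)"
proof -
  let ?M = "step_pmf c p Q" and ?W = "W_perp c Q" and ?q = "perp_K c Q" and ?D = "increment_bound c A_max"
  define G where "G AS = cinner c ?q (fst AS) / ?W + ((?D\<^sup>2 / 2 - cinner c ?q \<nu>) / ?W - \<delta>)"
    for AS :: "('n \<Rightarrow> 'n \<Rightarrow> real) \<times> ('n \<Rightarrow> 'n \<Rightarrow> real)"
  have integrable: "integrable ?M f" for f :: "_ \<Rightarrow> real"
    by (rule integrable_measure_pmf_finite[OF finite_set_step_pmf[OF supp]])
  have "delta_W_perp c Q AS \<le> G AS" if "AS \<in> set_pmf ?M" for AS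
    using delta_W_perp_le[OF c_pos \<nu>_rows \<nu>_cols \<delta>_pos \<delta>_le supp Q_Nats W_pos that] W_pos
    by (simp add: G_def field_simps)
  then have "measure_pmf.expectation ?M (delta_W_perp c Q) \<le> measure_pmf.expectation ?M G"
    by (intro integral_mono_AE integrable) (simp add: AE_measure_pmf_iff)
  also have "\<dots> = measure_pmf.expectation ?M (\<lambda>AS. cinner c ?q (fst AS)) / ?W
      + ((?D\<^sup>2 / 2 - cinner c ?q \<nu>) / ?W - \<delta>)"
    unfolding G_def by (simp add: integrable)
  also have "\<dots> = - \<epsilon> * cinner c ?q \<nu> / ?W - \<delta> + ?D\<^sup>2 / (2 * ?W)"
    using W_pos by (simp add: expectation_cinner_arrival[OF supp mean] field_simps)
  also have "- \<epsilon> * cinner c ?q \<nu> / ?W \<le> \<epsilon> * norm (emb c \<nu>)"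
  proof -
    have "- cinner c ?q \<nu> \<le> ?W * norm (emb c \<nu>)"
      using Cauchy_Schwarz_ineq2[of "emb c ?q" "emb c \<nu>"]
      by (simp add: cinner_emb[OF c_pos] W_perp_eq_norm[OF c_pos])
    then have "- cinner c ?q \<nu> / ?W \<le> norm (emb c \<nu>)"
      by (subst pos_divide_le_eq[OF W_pos]) (simp add: mult.commute)
    then have "\<epsilon> * (- cinner c ?q \<nu> / ?W) \<le> \<epsilon> * norm (emb c \<nu>)"
      using \<open>\<epsilon> \<ge> 0\<close> by (rule mult_left_mono)
    then show ?thesis
      by simp
  qed
  finally show ?thesis
    by simp
qed

section \<open>Choice of the constants\<close>

lemma finite_positive_lower_bound:
  fixes f :: "'a::finite \<Rightarrow> 'b::finite \<Rightarrow> real"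
  assumes "\<forall>x y. f x y > 0"
  obtains \<delta> where "\<delta> > 0" "\<forall>x y. \<delta> \<le> f x y"
proof
  show "Min (range (case_prod f)) > 0"
    using Min_in[of "range (case_prod f)"] assms by auto
  have "f x y \<in> range (case_prod f)" for x y
    by (rule image_eqI[of _ _ "(x, y)"]) simp_all
  then show "\<forall>x y. Min (range (case_prod f)) \<le> f x y"
    by (simp add: Min_le)
qed

lemma rel_interior_doubly_stochastic_line_sums:
  assumes "(\<chi> i j. \<nu> i j) \<in> rel_interior (doubly_stochastic :: (real^'n::finite^'n) set)"
  shows "\<forall>i. (\<Sum>j\<in>UNIV. \<nu> i j) = 1" and "\<forall>j. (\<Sum>i\<in>UNIV. \<nu> i j) = 1"
proof -
  have "(\<chi> i j. \<nu> i j) \<in> (doubly_stochastic :: (real^'n^'n) set)"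
    using assms rel_interior_subset by blast
  then show "\<forall>i. (\<Sum>j\<in>UNIV. \<nu> i j) = 1" and "\<forall>j. (\<Sum>i\<in>UNIV. \<nu> i j) = 1"
    unfolding doubly_stochastic_def by auto
qed

lemma drift_constants:
  fixes \<delta> n D W \<epsilon> :: real
  assumes "\<delta> > 0" "n \<ge> 0" "0 \<le> \<epsilon>" "\<epsilon> \<le> \<delta> / (2 * n + 1)" "2 * D\<^sup>2 / \<delta> + 1 \<le> W"
  shows "\<epsilon> * n - \<delta> + D\<^sup>2 / (2 * W) \<le> - (\<delta> / 4)"
proof -
  have "\<epsilon> * n \<le> \<delta> / (2 * n + 1) * n"
    using assms(4,2) by (rule mult_right_mono)
  also have "\<dots> \<le> \<delta> / 2"
    using assms(1,2) by (simp add: field_simps)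
  finally have "\<epsilon> * n \<le> \<delta> / 2" .
  moreover have "2 * D\<^sup>2 / \<delta> \<ge> 0"
    using assms(1) by simp
  then have "W > 0" and "2 * D\<^sup>2 / \<delta> \<le> W"
    using assms(5) by linarith+
  then have "D\<^sup>2 / (2 * W) \<le> \<delta> / 4"
    using assms(1) by (simp add: field_simps)
  ultimately show ?thesis
    by linarith
qed

theorem mainTheorem3:
  fixes c \<nu> :: "'n::finite \<Rightarrow> 'n \<Rightarrow> real"
    and A_max :: nat and \<sigma>t :: real
  assumes n_ge2: "CARD('n) \<ge> 2"
    and c_pos: "\<forall>i j. c i j > 0"
    and \<nu>_relint: "(\<chi> i j. \<nu> i j) \<in> rel_interior (doubly_stochastic :: (real^'n^'n) set)"
    and \<nu>_pos: "\<forall>i j. \<nu> i j > 0"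
  shows "\<exists>\<eta> \<kappa> D \<epsilon>0. \<eta> > 0 \<and> \<kappa> > 0 \<and> D > 0 \<and> \<epsilon>0 > 0 \<and>
     (\<forall>\<epsilon> p. 0 < \<epsilon> \<and> \<epsilon> \<le> \<epsilon>0
        \<and> (\<forall>i j. set_pmf (p i j) \<subseteq> {0..A_max})
        \<and> (\<forall>i j. measure_pmf.expectation (p i j) real = (1 - \<epsilon>) * \<nu> i j)
        \<and> (\<Sum>i\<in>UNIV. \<Sum>j\<in>UNIV. measure_pmf.variance (p i j) real) \<le> \<sigma>t\<^sup>2
      \<longrightarrow> (\<forall>Q :: 'n \<Rightarrow> 'n \<Rightarrow> real. (\<forall>i j. Q i j \<in> \<nat>) \<longrightarrow>
            (AE AS in measure_pmf (step_pmf c p Q). \<bar>delta_W_perp c Q AS\<bar> \<le> D)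
          \<and> (W_perp c Q \<ge> \<kappa> \<longrightarrow>
               measure_pmf.expectation (step_pmf c p Q) (delta_W_perp c Q) \<le> - \<eta>)))"
proof -
  note \<nu>_rows = rel_interior_doubly_stochastic_line_sums(1)[OF \<nu>_relint]
    and \<nu>_cols = rel_interior_doubly_stochastic_line_sums(2)[OF \<nu>_relint]
  obtain \<delta> where \<delta>_pos: "\<delta> > 0" and \<delta>_le: "\<forall>i j. \<delta> \<le> \<nu> i j * sqrt (c i j)"
    using finite_positive_lower_bound[of "\<lambda>i j. \<nu> i j * sqrt (c i j)"] \<nu>_pos c_pos by auto
  let ?D = "increment_bound c A_max" and ?n = "norm (emb c \<nu>)"
  have \<kappa>_pos: "2 * ?D\<^sup>2 / \<delta> + 1 > 0"
    using \<delta>_pos by (simp add: add_nonneg_pos)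
  show ?thesis
  proof (rule exI[of _ "\<delta> / 4"], rule exI[of _ "2 * ?D\<^sup>2 / \<delta> + 1"], rule exI[of _ ?D],
      rule exI[of _ "\<delta> / (2 * ?n + 1)"], intro conjI allI impI)
    fix \<epsilon> p and Q :: "'n \<Rightarrow> 'n \<Rightarrow> real"
    assume H: "0 < \<epsilon> \<and> \<epsilon> \<le> \<delta> / (2 * ?n + 1) \<and> (\<forall>i j. set_pmf (p i j) \<subseteq> {0..A_max})
      \<and> (\<forall>i j. measure_pmf.expectation (p i j) real = (1 - \<epsilon>) * \<nu> i j)
      \<and> (\<Sum>i\<in>UNIV. \<Sum>j\<in>UNIV. measure_pmf.variance (p i j) real) \<le> \<sigma>t\<^sup>2"
      and Q_Nats: "\<forall>i j. Q i j \<in> \<nat>"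
    then have supp: "\<forall>i j. set_pmf (p i j) \<subseteq> {0..A_max}"
      by blast
    show "AE AS in measure_pmf (step_pmf c p Q). \<bar>delta_W_perp c Q AS\<bar> \<le> ?D"
      using delta_W_perp_bound[OF c_pos supp Q_Nats] by (simp add: AE_measure_pmf_iff)
    assume "2 * ?D\<^sup>2 / \<delta> + 1 \<le> W_perp c Q"
    moreover from this have "W_perp c Q > 0"
      using \<kappa>_pos by linarith
    ultimately show "measure_pmf.expectation (step_pmf c p Q) (delta_W_perp c Q) \<le> - (\<delta> / 4)"
      using expected_delta_W_perp_le[OF c_pos \<nu>_rows \<nu>_cols \<delta>_pos \<delta>_le _ _ _ Q_Nats] H
        drift_constants[OF \<delta>_pos norm_ge_zero] by (meson less_imp_le order_trans)
  qed (use \<delta>_pos \<kappa>_pos increment_bound_pos[OF c_pos] in \<open>auto intro!: divide_pos_pos add_nonneg_pos\<close>)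
qed

end
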